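(* For each integer $n\ge 0$, let $a_n$ denote the number of non-negative integers $k$ such that the decimal representation of $k$ is a palindrome and the decimal representation of $k^2$ is a palindrome having exactly $n+1$ digits. Then $a_0=4$, $a_{2n+1}=0$ for all $n\ge 0$, and for all $n\ge 1$, $$a_{2n}=\frac{\left((-1)^{n}+3\right)n^{3}-\left(9(-1)^{n}+15\right)n^{2}+\left(65(-1)^{n}+111\right)n+21(-1)^{n}+171}{96}.$$
   Context: This is the sequence A307717 of the On-Line Encyclopedia of Integer Sequences, re-indexed to start at $0$: $a_n$ is its $(n+1)$-st term. Numbers are written in base $10$ without leading zeros; the integer $0$ is written with one digit, so it is a palindrome of length $1$ (and $0,1,2,3$ are the palindromes $k$ with $k^2$ a one-digit palindrome). *)

theory Defs
  imports Main "HOL.Real"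
begin

fun digits10_aux :: "nat \<Rightarrow> nat list" where
  "digits10_aux n = (if n = 0 then [] else n mod 10 # digits10_aux (n div 10))"

definition digits10 :: "nat \<Rightarrow> nat list" where
  "digits10 n = (if n = 0 then [0] else digits10_aux n)"

definition num_digits :: "nat \<Rightarrow> nat" where
  "num_digits n = length (digits10 n)"

definition is_palindrome :: "nat \<Rightarrow> bool" where
  "is_palindrome n \<longleftrightarrow> rev (digits10 n) = digits10 n"

definition a_seq :: "nat \<Rightarrow> nat" where
  "a_seq n = card {k :: nat. is_palindrome k \<and> is_palindrome (k^2) \<and> num_digits (k^2) = n + 1}"

end

theory Submission
  imports Defs "HOL-Computational_Algebra.Polynomial"
begin

text \<open>
  Let \<open>k\<close> be an \<open>m\<close>-digit palindrome with digit polynomial \<open>p\<close>, so \<open>k\<^sup>2 = (p * p)(10)\<close> and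
  the coefficients \<open>c\<^sub>j\<close> of \<open>p * p\<close> are the column sums of schoolbook squaring. As \<open>p\<close> is
  self-reciprocal, \<open>c\<close> is symmetric, and its middle entry \<open>c\<^sub>m\<^sub>-\<^sub>1\<close> is the sum \<open>s\<close> of the
  squares of the digits of \<open>k\<close>, which bounds every \<open>c\<^sub>j\<close> by AM-GM. If \<open>s \<le> 9\<close>, squaring
  produces no carries and \<open>k\<^sup>2\<close> is a palindrome with digits \<open>c\<^sub>j\<close>. Conversely, if \<open>k\<^sup>2\<close> is a
  palindrome it cannot have \<open>2m\<close> digits (its first digit would differ from its last one), and
  with \<open>2m - 1\<close> digits the carry equations at mirror positions force all carries to vanish,
  so \<open>s = c\<^sub>m\<^sub>-\<^sub>1\<close> is a digit.

  Hence, apart from \<open>k = 0\<close>, \<open>a\<^sub>n\<close> counts palindromic digit strings of length \<open>n/2 + 1\<close> whose digit squares sum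
  to at most 9. Such a string is determined by its lower half (and middle digit), whose digits
  other than the leading one are 0 or 1; counting these by the number of ones gives the cubic.
\<close>

section \<open>Decimal digits\<close>

declare digits10_aux.simps[simp del]

lemma digits10_aux_0 [simp]: "digits10_aux 0 = []"
  by (simp add: digits10_aux.simps)

lemma digits10_aux_nonzero: "n \<noteq> 0 \<Longrightarrow> digits10_aux n = n mod 10 # digits10_aux (n div 10)"
  by (simp add: digits10_aux.simps)

lemma digits10_nonzero: "n \<noteq> 0 \<Longrightarrow> digits10 n = digits10_aux n"
  by (simp add: digits10_def)

definition digit :: "nat \<Rightarrow> nat \<Rightarrow> nat" where
  "digit n j = n div 10 ^ j mod 10"

lemma digit_less: "digit n j < 10"
  by (simp add: digit_def)

lemma digit_0_right: "digit n 0 = n mod 10"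
  by (simp add: digit_def)

lemma digit_Suc: "digit n (Suc j) = digit (n div 10) j"
  by (simp add: digit_def div_mult2_eq)

lemma digit_add_mult_power: "digit (a + 10 ^ Suc j * r) j = digit a j"
proof -
  have "(a + 10 ^ Suc j * r) div 10 ^ j = 10 * r + a div 10 ^ j"
    using div_mult_self1[of "10 ^ j" a "10 * r"] by (simp add: ac_simps)
  then show ?thesis
    by (simp add: digit_def ac_simps)
qed

lemma digits10_aux_eq_map: "digits10_aux n = map (digit n) [0..<length (digits10_aux n)]"
proof (induction n rule: digits10_aux.induct)
  case (1 n)
  show ?case
  proof (cases "n = 0")
    case False
    then show ?thesis
      using "1" by (simp add: digits10_aux_nonzero digit_0_right digit_Suc map_upt_Suc del: upt_Suc)
  qed simp
qed

lemma digits10_aux_bounds: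
  "n \<noteq> 0 \<Longrightarrow> 10 ^ (length (digits10_aux n) - 1) \<le> n \<and> n < 10 ^ length (digits10_aux n)"
proof (induction n rule: digits10_aux.induct)
  case (1 n)
  then show ?case
    by (cases "n div 10 = 0") (auto simp: digits10_aux_nonzero digits10_aux_nonzero[of "n div 10"])
qed

lemma num_digits_nonzero: "n \<noteq> 0 \<Longrightarrow> num_digits n = length (digits10_aux n)"
  by (simp add: num_digits_def digits10_def)

lemma num_digits_pos: "0 < num_digits n"
  by (cases "n = 0") (simp_all add: num_digits_def digits10_def digits10_aux_nonzero)

lemma less_power_num_digits: "n < 10 ^ num_digits n"
  using digits10_aux_bounds[of n] by (cases "n = 0") (simp_all add: num_digits_nonzero)

lemma power_num_digits_le: "0 < n \<Longrightarrow> 10 ^ (num_digits n - 1) \<le> n"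
  using digits10_aux_bounds[of n] by (simp add: num_digits_nonzero)

lemma num_digits_eqI:
  assumes "10 ^ (L - 1) \<le> n" "n < 10 ^ L" "0 < L"
  shows "num_digits n = L"
proof -
  have "0 < n"
    using assms(1) by (metis le_zero_eq power_not_zero zero_neq_numeral not_gr0)
  then have "10 ^ (num_digits n - 1) < (10::nat) ^ L" "10 ^ (L - 1) < (10::nat) ^ num_digits n"
    using power_num_digits_le[of n] less_power_num_digits[of n] assms by linarith+
  then show ?thesis
    using num_digits_pos[of n] assms(3) by (simp add: power_strict_increasing_iff)
qed

lemma digits10_eq_map: "digits10 n = map (digit n) [0..<num_digits n]"
proof (cases "n = 0")
  case False
  show ?thesis
    unfolding digits10_nonzero[OF False] num_digits_nonzero[OF False]
    by (rule digits10_aux_eq_map)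
qed (simp add: digits10_def num_digits_def digit_def)

lemma digit_beyond_num_digits: "num_digits n \<le> j \<Longrightarrow> digit n j = 0"
  using less_le_trans[OF less_power_num_digits, of n "10 ^ j"] by (simp add: digit_def)

lemma is_palindrome_iff_digit:
  "is_palindrome n \<longleftrightarrow> (\<forall>j<num_digits n. digit n j = digit n (num_digits n - 1 - j))"
proof -
  have "rev (digits10 n) ! j = digits10 n ! j \<longleftrightarrow> digit n j = digit n (num_digits n - 1 - j)"
    if "j < num_digits n" for j
    using that by (auto simp: digits10_eq_map rev_nth)
  then show ?thesis
    unfolding is_palindrome_def list_eq_iff_nth_eq by (simp add: num_digits_def)
qed

lemma leading_digit:
  assumes "0 < n"
  shows "digit n (num_digits n - 1) = n div 10 ^ (num_digits n - 1)"
    and "0 < digit n (num_digits n - 1)"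
proof -
  have "n < 10 * 10 ^ (num_digits n - 1)"
    using less_power_num_digits[of n] num_digits_pos[of n] by (simp flip: power_Suc)
  then have "n div 10 ^ (num_digits n - 1) < 10"
    by (simp add: div_less_iff_less_mult mult.commute)
  then show "digit n (num_digits n - 1) = n div 10 ^ (num_digits n - 1)"
    by (simp add: digit_def)
  then show "0 < digit n (num_digits n - 1)"
    using power_num_digits_le[OF assms] by (simp add: div_greater_zero_iff)
qed

lemma horner_sum_digits10: "horner_sum id 10 (digits10 n) = n"
proof -
  have "horner_sum id 10 (digits10_aux n) = n"
    by (induction n rule: digits10_aux.induct) (case_tac "n = 0", simp_all add: digits10_aux_nonzero)
  then show ?thesis
    by (simp add: digits10_def)
qed

lemma inj_digits10: "inj digits10"
  by (rule inj_on_inverseI[of _ "horner_sum id 10"]) (rule horner_sum_digits10)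

lemma horner_sum_nonzero:
  "ds \<noteq> [] \<Longrightarrow> last ds \<noteq> 0 \<Longrightarrow> horner_sum id (10::nat) ds \<noteq> 0"
  by (induction ds) (auto split: if_splits)

lemma digits10_aux_horner_sum:
  "set ds \<subseteq> {..<10} \<Longrightarrow> (ds = [] \<or> last ds \<noteq> 0) \<Longrightarrow> digits10_aux (horner_sum id 10 ds) = ds"
proof (induction ds)
  case (Cons d ds)
  have "horner_sum id (10::nat) (d # ds) \<noteq> 0"
    using Cons.prems(2) horner_sum_nonzero[of "d # ds"] by simp
  then show ?case
    using Cons by (auto simp: digits10_aux_nonzero id_def split: if_splits)
qed simp

lemma last_digits10_aux: "n \<noteq> 0 \<Longrightarrow> last (digits10_aux n) \<noteq> 0"
proof (induction n rule: digits10_aux.induct)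
  case (1 n)
  show ?case
  proof (cases "n div 10 = 0")
    case True
    then show ?thesis
      using "1.prems" by (simp add: digits10_aux_nonzero)
  next
    case False
    then show ?thesis
      using "1" by (simp add: digits10_aux_nonzero[of n] digits10_aux_nonzero[of "n div 10"])
  qed
qed

lemma set_digits10_aux: "set (digits10_aux n) \<subseteq> {..<10}"
proof (induction n rule: digits10_aux.induct)
  case (1 n)
  then show ?case
    by (cases "n = 0") (auto simp: digits10_aux_nonzero)
qed

lemma digits10_image:
  assumes "0 < m"
  shows "digits10 ` {n. 0 < n \<and> num_digits n = m} = {ds. length ds = m \<and> set ds \<subseteq> {..<10} \<and> last ds \<noteq> 0}"
proof (intro equalityI subsetI)
  fix ds assume "ds \<in> digits10 ` {n. 0 < n \<and> num_digits n = m}"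
  then show "ds \<in> {ds. length ds = m \<and> set ds \<subseteq> {..<10} \<and> last ds \<noteq> 0}"
    using set_digits10_aux last_digits10_aux by (auto simp: digits10_nonzero num_digits_nonzero)
next
  fix ds :: "nat list"
  assume ds: "ds \<in> {ds. length ds = m \<and> set ds \<subseteq> {..<10} \<and> last ds \<noteq> 0}"
  then have "ds \<noteq> []"
    using assms by auto
  then have "digits10 (horner_sum id 10 ds) = ds" "horner_sum id 10 ds \<noteq> 0"
    using ds digits10_aux_horner_sum[of ds] horner_sum_nonzero[of ds] by (auto simp: digits10_nonzero)
  then show "ds \<in> digits10 ` {n. 0 < n \<and> num_digits n = m}"
    using ds by (metis (mono_tags, lifting) image_eqI mem_Collect_eq num_digits_def gr0I)
qed

section \<open>Carries in sums of multiples of powers of ten\<close>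

definition carry :: "(nat \<Rightarrow> nat) \<Rightarrow> nat \<Rightarrow> nat" where
  "carry c j = (\<Sum>i<j. c i * 10 ^ i) div 10 ^ j"

lemma carry_0 [simp]: "carry c 0 = 0"
  by (simp add: carry_def)

lemma sum_power10_split:
  fixes c :: "nat \<Rightarrow> nat"
  assumes "Suc j \<le> n"
  shows "\<exists>r. (\<Sum>i<n. c i * 10 ^ i) = (\<Sum>i<Suc j. c i * 10 ^ i) + 10 ^ Suc j * r"
  using assms
proof (induction n rule: dec_induct)
  case (step m)
  then obtain r where "(\<Sum>i<m. c i * 10 ^ i) = (\<Sum>i<Suc j. c i * 10 ^ i) + 10 ^ Suc j * r"
    by blast
  moreover have "(10::nat) ^ m = 10 ^ Suc j * 10 ^ (m - Suc j)"
    using step.hyps(1) by (metis le_add_diff_inverse power_add)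
  ultimately have "(\<Sum>i<Suc m. c i * 10 ^ i)
      = (\<Sum>i<Suc j. c i * 10 ^ i) + 10 ^ Suc j * (r + c m * 10 ^ (m - Suc j))"
    by (simp add: algebra_simps)
  then show ?case
    by blast
qed simp_all

lemma digit_carry_step:
  assumes "j < n"
  shows "c j + carry c j = digit (\<Sum>i<n. c i * 10 ^ i) j + 10 * carry c (Suc j)"
proof -
  have low: "(\<Sum>i<Suc j. c i * 10 ^ i) div 10 ^ j = c j + carry c j"
    by (simp add: carry_def)
  obtain r where "(\<Sum>i<n. c i * 10 ^ i) = (\<Sum>i<Suc j. c i * 10 ^ i) + 10 ^ Suc j * r"
    using sum_power10_split[of j n c] assms by auto
  then have "digit (\<Sum>i<n. c i * 10 ^ i) j = digit (\<Sum>i<Suc j. c i * 10 ^ i) j"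
    by (simp only: digit_add_mult_power)
  also have "\<dots> = (c j + carry c j) mod 10"
    by (simp only: digit_def low)
  finally have "digit (\<Sum>i<n. c i * 10 ^ i) j = (c j + carry c j) mod 10" .
  moreover have "carry c (Suc j) = (c j + carry c j) div 10"
    by (simp only: carry_def power_Suc2 div_mult2_eq low)
  ultimately show ?thesis
    by simp
qed

lemma carry_free_digits:
  assumes "\<forall>j<L. c j < 10"
  shows "(\<Sum>i<L. c i * 10 ^ i) < 10 ^ L" and "j < L \<Longrightarrow> digit (\<Sum>i<L. c i * 10 ^ i) j = c j"
proof -
  have no_carry: "j \<le> L \<Longrightarrow> carry c j = 0" for j
  proof (induction j)
    case (Suc j)
    then have "j < L" "c j < 10" "carry c j = 0"
      using assms by auto
    then show ?case
      using digit_carry_step[of j L c] by linarith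
  qed simp
  show "(\<Sum>i<L. c i * 10 ^ i) < 10 ^ L"
    using no_carry[of L] by (simp add: carry_def div_eq_0_iff)
  show "digit (\<Sum>i<L. c i * 10 ^ i) j = c j" if "j < L"
    using that digit_carry_step[of j L c] no_carry[of j] no_carry[of "Suc j"] by simp
qed

text \<open>If both the column sums \<open>c\<close> and the digits of \<open>N\<close> are symmetric, then
  comparing the carry equations at \<open>j\<close> and \<open>M - j\<close> gives
  \<open>carry j + 10 * carry (M + 1 - j) = carry (M - j) + 10 * carry (j + 1)\<close>; as the carries
  vanish at both ends, induction from the outside in kills all of them.\<close>

lemma symmetric_sum_carry_free:
  assumes N: "N = (\<Sum>i<Suc M. c i * 10 ^ i)" and N_less: "N < 10 ^ Suc M"
    and c_sym: "\<forall>j\<le>M. c (M - j) = c j"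
    and N_sym: "\<forall>j\<le>M. digit N (M - j) = digit N j"
  shows "\<forall>j\<le>M. digit N j = c j"
proof -
  have step: "c j + carry c j = digit N j + 10 * carry c (Suc j)" if "j \<le> M" for j
    unfolding N using digit_carry_step[of j "Suc M" c] that by simp
  have top: "carry c (Suc M) = 0"
    using N N_less by (simp add: carry_def)
  have outside_in: "carry c j = 0 \<and> carry c (Suc M - j) = 0" if "j \<le> Suc M" for j
    using that
  proof (induction j)
    case (Suc j)
    then have j: "j \<le> M" "M - j \<le> M" "Suc (M - j) = Suc M - j" "M - (M - j) = j"
      by auto
    have "c (M - j) = c j" "digit N (M - j) = digit N j"
      using c_sym N_sym j(1) by blast+
    then have "carry c j + 10 * carry c (Suc M - j) = carry c (M - j) + 10 * carry c (Suc j)"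
      using step[OF j(1)] step[OF j(2)] unfolding j(3,4) by linarith
    then show ?case
      using Suc by simp
  qed (simp add: top)
  show ?thesis
  proof (intro allI impI)
    fix j
    assume "j \<le> M"
    then show "digit N j = c j"
      using step[of j] outside_in[of j] outside_in[of "Suc j"] by simp
  qed
qed

section \<open>Squares of self-reciprocal polynomials and the digit polynomial\<close>

lemma nat_two_mult_le_sum_squares: "2 * x * y \<le> x ^ 2 + (y::nat) ^ 2"
proof -
  have "real (2 * x * y) \<le> real (x ^ 2 + y ^ 2)"
    using sum_squares_bound[of "real x" "real y"] by simp
  then show ?thesis
    by (simp only: of_nat_le_iff)
qed

lemma coeff_square_le_sum_squares:
  fixes p :: "nat poly"
  shows "coeff (p * p) j \<le> (\<Sum>i\<le>degree p. coeff p i ^ 2)"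
proof -
  define a where "a = coeff p"
  have "2 * coeff (p * p) j = (\<Sum>i\<le>j. 2 * a i * a (j - i))"
    by (simp add: coeff_mult sum_distrib_left mult.assoc a_def)
  also have "\<dots> \<le> (\<Sum>i\<le>j. a i ^ 2 + a (j - i) ^ 2)"
    by (intro sum_mono nat_two_mult_le_sum_squares)
  also have "\<dots> = 2 * (\<Sum>i\<le>j. a i ^ 2)"
    using sum.atLeastAtMost_rev[of "\<lambda>i. a i ^ 2" 0 j]
    by (simp add: sum.distrib atLeast0AtMost)
  also have "(\<Sum>i\<le>j. a i ^ 2) \<le> (\<Sum>i\<le>max j (degree p). a i ^ 2)"
    by (rule sum_mono2) auto
  also have "\<dots> = (\<Sum>i\<le>degree p. a i ^ 2)"
    by (rule sum.mono_neutral_right) (auto simp: a_def coeff_eq_0)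
  finally show ?thesis
    by (simp add: a_def)
qed

lemma coeff_square_reflect:
  fixes p :: "'a::{comm_semiring_0,semiring_no_zero_divisors} poly"
  assumes "reflect_poly p = p" "j \<le> 2 * degree p"
  shows "coeff (p * p) (2 * degree p - j) = coeff (p * p) j"
proof (cases "p = 0")
  case False
  then have "degree (p * p) = 2 * degree p"
    by (simp add: degree_mult_eq)
  then have "coeff (reflect_poly (p * p)) j = coeff (p * p) (2 * degree p - j)"
    using assms(2) by (simp add: coeff_reflect_poly)
  then show ?thesis
    using assms(1) by (simp add: reflect_poly_mult)
qed simp

lemma coeff_square_middle:
  fixes p :: "'a::comm_semiring_1 poly"
  assumes "reflect_poly p = p"
  shows "coeff (p * p) (degree p) = (\<Sum>i\<le>degree p. coeff p i ^ 2)"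
proof -
  have "coeff p (degree p - i) = coeff p i" if "i \<le> degree p" for i
    using that arg_cong[OF assms, of "\<lambda>q. coeff q i"] by (simp add: coeff_reflect_poly)
  then show ?thesis
    by (simp add: coeff_mult power2_eq_square)
qed

definition digit_poly :: "nat \<Rightarrow> nat poly" where
  "digit_poly n = Poly (digits10 n)"

abbreviation sum_squares :: "nat list \<Rightarrow> nat" where
  "sum_squares ds \<equiv> (\<Sum>d\<leftarrow>ds. d ^ 2)"

lemma coeff_digit_poly: "coeff (digit_poly n) j = digit n j"
  by (cases "j < num_digits n")
    (simp_all add: digit_poly_def nth_default_def digits10_eq_map digit_beyond_num_digits)

lemma coeffs_digit_poly: "n \<noteq> 0 \<Longrightarrow> coeffs (digit_poly n) = digits10 n"
  using last_digits10_aux[of n] by (simp add: digit_poly_def digits10_nonzero no_trailing_unfold)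

lemma degree_digit_poly: "degree (digit_poly n) = num_digits n - 1"
proof (cases "n = 0")
  case False
  then show ?thesis
    by (simp add: degree_eq_length_coeffs coeffs_digit_poly num_digits_def)
qed (simp add: digit_poly_def digits10_def num_digits_def)

lemma poly_Poly: "poly (Poly ds) x = horner_sum id x ds"
  by (induction ds) simp_all

lemma poly_digit_poly: "poly (digit_poly n) 10 = n"
  by (simp add: digit_poly_def poly_Poly horner_sum_digits10)

lemma digit_poly_nonzero: "0 < n \<Longrightarrow> digit_poly n \<noteq> 0"
  using poly_digit_poly[of n] by auto

lemma reflect_digit_poly:
  assumes "is_palindrome n"
  shows "reflect_poly (digit_poly n) = digit_poly n"
proof (cases "n = 0")
  case False
  then show ?thesis
    unfolding reflect_poly_def coeffs_digit_poly[OF False]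
    using assms by (simp add: is_palindrome_def digit_poly_def)
qed (simp add: digit_poly_def digits10_def)

lemma sum_squares_digits10:
  "sum_squares (digits10 n) = (\<Sum>i\<le>degree (digit_poly n). coeff (digit_poly n) i ^ 2)"
proof -
  have "{..degree (digit_poly n)} = {0..<num_digits n}"
    using num_digits_pos[of n] by (auto simp: degree_digit_poly)
  then show ?thesis
    by (simp add: digits10_eq_map interv_sum_list_conv_sum_set_nat coeff_digit_poly comp_def)
qed

section \<open>Palindromic squares of palindromes\<close>

lemma square_eq_sum_coeffs:
  assumes "0 < n"
  shows "n ^ 2 = (\<Sum>i<Suc (2 * (num_digits n - 1)). coeff (digit_poly n * digit_poly n) i * 10 ^ i)"
proof -
  have "degree (digit_poly n * digit_poly n) = 2 * (num_digits n - 1)"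
    using digit_poly_nonzero[OF assms] by (simp add: degree_mult_eq degree_digit_poly)
  moreover have "n ^ 2 = poly (digit_poly n * digit_poly n) 10"
    by (simp add: poly_digit_poly power2_eq_square)
  ultimately show ?thesis
    by (simp add: poly_altdef lessThan_Suc_atMost)
qed

lemma square_bounds:
  assumes "0 < n"
  shows "10 ^ (2 * (num_digits n - 1)) \<le> n ^ 2" and "n ^ 2 < 10 ^ (2 * num_digits n)"
proof -
  show "10 ^ (2 * (num_digits n - 1)) \<le> n ^ 2"
    unfolding power_even_eq by (rule power_mono[OF power_num_digits_le[OF assms]]) simp
  show "n ^ 2 < 10 ^ (2 * num_digits n)"
    unfolding power_even_eq by (rule power_strict_mono[OF less_power_num_digits]) simp_all
qed

lemma num_digits_square_cases:
  assumes "0 < n"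
  shows "num_digits (n ^ 2) = 2 * num_digits n - 1 \<or> num_digits (n ^ 2) = 2 * num_digits n"
proof (cases "n ^ 2 < 10 ^ (2 * num_digits n - 1)")
  case True
  have "2 * num_digits n - 1 - 1 = 2 * (num_digits n - 1)"
    by simp
  then have "num_digits (n ^ 2) = 2 * num_digits n - 1"
    using num_digits_pos[of n] square_bounds(1)[OF assms] True by (intro num_digits_eqI) simp_all
  then show ?thesis ..
next
  case False
  then have "num_digits (n ^ 2) = 2 * num_digits n"
    using num_digits_pos[of n] square_bounds(2)[OF assms] by (intro num_digits_eqI) simp_all
  then show ?thesis ..
qed

lemma square_carry_free:
  assumes "0 < n" and small: "sum_squares (digits10 n) \<le> 9"
  shows "num_digits (n ^ 2) = 2 * num_digits n - 1"
    and "j \<le> 2 * (num_digits n - 1) \<Longrightarrow> digit (n ^ 2) j = coeff (digit_poly n * digit_poly n) j"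
proof -
  let ?M = "2 * (num_digits n - 1)" and ?c = "coeff (digit_poly n * digit_poly n)"
  have "?c j < 10" for j
    using coeff_square_le_sum_squares[of "digit_poly n" j] small
    unfolding sum_squares_digits10 by linarith
  then have "\<forall>j<Suc ?M. ?c j < 10"
    by blast
  note carry_free = carry_free_digits[OF this, folded square_eq_sum_coeffs[OF assms(1)]]
  have "num_digits (n ^ 2) = Suc ?M"
    using square_bounds(1)[OF assms(1)] carry_free(1) by (intro num_digits_eqI) simp_all
  then show "num_digits (n ^ 2) = 2 * num_digits n - 1"
    using num_digits_pos[of n] by simp
  show "digit (n ^ 2) j = ?c j" if "j \<le> ?M"
    using carry_free(2) that by simp
qed

lemma palindrome_square_if_sum_squares_le_9:
  assumes "0 < n" "is_palindrome n" "sum_squares (digits10 n) \<le> 9"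
  shows "is_palindrome (n ^ 2)"
  unfolding is_palindrome_iff_digit
proof (intro allI impI)
  fix j
  let ?M = "2 * (num_digits n - 1)" and ?c = "coeff (digit_poly n * digit_poly n)"
  assume "j < num_digits (n ^ 2)"
  then have j: "j \<le> ?M" "num_digits (n ^ 2) - 1 - j = ?M - j"
    using square_carry_free(1)[OF assms(1,3)] num_digits_pos[of n] by auto
  have "?c (?M - j) = ?c j"
    using coeff_square_reflect[OF reflect_digit_poly[OF assms(2)]] j(1)
    by (simp add: degree_digit_poly)
  then show "digit (n ^ 2) j = digit (n ^ 2) (num_digits (n ^ 2) - 1 - j)"
    using square_carry_free(2)[OF assms(1,3)] j by simp
qed

lemma sum_squares_le_9_if_palindrome_square:
  assumes "0 < n" "is_palindrome n" "is_palindrome (n ^ 2)"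
    and odd_length: "num_digits (n ^ 2) = 2 * num_digits n - 1"
  shows "sum_squares (digits10 n) \<le> 9"
proof -
  let ?M = "2 * (num_digits n - 1)" and ?c = "coeff (digit_poly n * digit_poly n)"
  have len: "num_digits (n ^ 2) = Suc ?M"
    using odd_length num_digits_pos[of n] by simp
  have c_sym: "\<forall>j\<le>?M. ?c (?M - j) = ?c j"
    using coeff_square_reflect[OF reflect_digit_poly[OF assms(2)]] by (simp add: degree_digit_poly)
  have digit_sym: "\<forall>j\<le>?M. digit (n ^ 2) (?M - j) = digit (n ^ 2) j"
  proof (intro allI impI)
    fix j
    assume "j \<le> ?M"
    then show "digit (n ^ 2) (?M - j) = digit (n ^ 2) j"
      using assms(3)[unfolded is_palindrome_iff_digit, rule_format, of j] len by simp
  qed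
  have "n ^ 2 < 10 ^ Suc ?M"
    using less_power_num_digits[of "n ^ 2"] unfolding len .
  note carry_free = symmetric_sum_carry_free[OF square_eq_sum_coeffs[OF assms(1)] this c_sym digit_sym]
  have "?c (num_digits n - 1) < 10"
    using carry_free digit_less[of "n ^ 2" "num_digits n - 1"] by simp
  then show ?thesis
    using coeff_square_middle[OF reflect_digit_poly[OF assms(2)]]
    by (simp add: sum_squares_digits10 degree_digit_poly)
qed

text \<open>If a palindrome \<open>n\<close> starts and ends with the digit \<open>a\<close> and \<open>n\<^sup>2\<close> has an even number of
  digits, then \<open>q\<close> below is formed by the two leading digits of \<open>n\<^sup>2\<close>, and \<open>a\<^sup>2 mod 10\<close> is its
  last digit.\<close>

lemma square_leading_digit_ne_last_digit:
  fixes a q :: nat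
  assumes "0 < a" "a < 10" "a ^ 2 \<le> q" "q < (a + 1) ^ 2" "10 \<le> q"
  shows "q div 10 \<noteq> a ^ 2 mod 10"
proof -
  have "a = 1 \<or> a = 2 \<or> a = 3 \<or> a = 4 \<or> a = 5 \<or> a = 6 \<or> a = 7 \<or> a = 8 \<or> a = 9"
    using assms(1,2) by linarith
  then show ?thesis
    using assms(3-5) by (elim disjE) (simp_all add: power2_eq_square)
qed

lemma square_div_square_bounds:
  fixes n b :: nat
  assumes "0 < b"
  shows "(n div b) ^ 2 \<le> n ^ 2 div b ^ 2" and "n ^ 2 div b ^ 2 < (n div b + 1) ^ 2"
proof -
  have "(n div b * b) ^ 2 \<le> n ^ 2"
    by (intro power_mono) simp_all
  then show "(n div b) ^ 2 \<le> n ^ 2 div b ^ 2"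
    using assms by (simp add: less_eq_div_iff_mult_less_eq power_mult_distrib)
  have "n < (n div b + 1) * b"
    using assms div_less_iff_less_mult[of b n "n div b + 1"] by simp
  then have "n ^ 2 < ((n div b + 1) * b) ^ 2"
    by (intro power_strict_mono) simp_all
  then have "n ^ 2 < (n div b + 1) ^ 2 * b ^ 2"
    by (simp only: power_mult_distrib)
  then show "n ^ 2 div b ^ 2 < (n div b + 1) ^ 2"
    using assms by (simp add: div_less_iff_less_mult)
qed

lemma palindrome_square_not_even_length:
  assumes "0 < n" "is_palindrome n" and even_length: "num_digits (n ^ 2) = 2 * num_digits n"
  shows "\<not> is_palindrome (n ^ 2)"
proof
  assume pal: "is_palindrome (n ^ 2)"
  let ?m = "num_digits n"
  let ?M = "2 * (?m - 1)"
  define a where "a = digit n 0"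
  define q where "q = n ^ 2 div 10 ^ ?M"
  have "a = digit n (?m - 1)"
    using assms(2)[unfolded is_palindrome_iff_digit, rule_format, of 0] num_digits_pos[of n]
    by (simp add: a_def)
  then have a: "a = n div 10 ^ (?m - 1)" "0 < a" "a < 10"
    using leading_digit[OF assms(1)] digit_less[of n 0] by (simp_all add: a_def)
  have q_lower: "a ^ 2 \<le> q" and q_upper: "q < (a + 1) ^ 2"
    using square_div_square_bounds[of "10 ^ (?m - 1)" n] unfolding q_def power_even_eq a(1) by simp_all
  have top: "Suc ?M = num_digits (n ^ 2) - 1"
    using even_length num_digits_pos[of n] by simp
  then have "10 ^ Suc ?M \<le> n ^ 2"
    using power_num_digits_le[of "n ^ 2"] assms(1) by simp
  then have q_ge_10: "10 \<le> q"
    by (simp add: q_def less_eq_div_iff_mult_less_eq mult.commute)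
  have "(a + 1) ^ 2 \<le> 10 ^ 2"
    using a(3) by (intro power_mono) simp_all
  then have "q div 10 < 10"
    using q_upper by simp
  moreover have "digit (n ^ 2) (Suc ?M) = q div 10 mod 10"
    by (simp only: digit_def q_def power_Suc2 div_mult2_eq)
  ultimately have "digit (n ^ 2) (Suc ?M) = q div 10"
    by simp
  moreover have "digit (n ^ 2) 0 = a ^ 2 mod 10"
    by (simp add: digit_0_right a_def power_mod)
  moreover have "digit (n ^ 2) 0 = digit (n ^ 2) (Suc ?M)"
    unfolding top using pal[unfolded is_palindrome_iff_digit, rule_format, of 0] num_digits_pos
    by simp
  ultimately show False
    using square_leading_digit_ne_last_digit[OF a(2,3) q_lower q_upper q_ge_10] by simp
qed

theorem palindrome_square_iff:
  assumes "0 < n" "is_palindrome n"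
  shows "is_palindrome (n ^ 2) \<longleftrightarrow> sum_squares (digits10 n) \<le> 9"
proof
  assume "is_palindrome (n ^ 2)"
  then show "sum_squares (digits10 n) \<le> 9"
    using num_digits_square_cases[OF assms(1)] palindrome_square_not_even_length[OF assms]
      sum_squares_le_9_if_palindrome_square[OF assms] by blast
qed (rule palindrome_square_if_sum_squares_le_9[OF assms])

lemma palindromic_square_iff:
  "is_palindrome k \<and> is_palindrome (k ^ 2) \<and> num_digits (k ^ 2) = n + 1 \<longleftrightarrow>
    k = 0 \<and> n = 0 \<or>
    0 < k \<and> n + 2 = 2 * num_digits k \<and> is_palindrome k \<and> sum_squares (digits10 k) \<le> 9"
proof (cases "k = 0")
  case True
  then show ?thesis
    by (auto simp: is_palindrome_def digits10_def num_digits_def)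
next
  case False
  then show ?thesis
    using palindrome_square_iff[of k] square_carry_free(1)[of k] num_digits_pos[of k] by auto
qed

section \<open>Counting\<close>

definition digit_lists :: "nat \<Rightarrow> nat \<Rightarrow> nat list set" where
  "digit_lists j s = {ds. length ds = j \<and> set ds \<subseteq> {..<10} \<and> sum_squares ds \<le> s}"

lemma finite_digit_lists: "finite (digit_lists j s)"
proof (rule finite_subset)
  show "digit_lists j s \<subseteq> {ds. set ds \<subseteq> {..<10} \<and> length ds = j}"
    by (auto simp: digit_lists_def)
qed (simp add: finite_lists_length_eq)

lemma digit_lists_Suc_by_head:
  "{ds \<in> digit_lists (Suc j) s. P (hd ds)}
    = (\<Union>d\<in>{d. d < 10 \<and> d ^ 2 \<le> s \<and> P d}. Cons d ` digit_lists j (s - d ^ 2))"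
proof (intro equalityI subsetI)
  fix ds
  assume "ds \<in> {ds \<in> digit_lists (Suc j) s. P (hd ds)}"
  then obtain d ds' where "ds = d # ds'" "d < 10" "d ^ 2 + sum_squares ds' \<le> s" "P d"
      "length ds' = j" "set ds' \<subseteq> {..<10}"
    by (cases ds) (auto simp: digit_lists_def)
  then show "ds \<in> (\<Union>d\<in>{d. d < 10 \<and> d ^ 2 \<le> s \<and> P d}. Cons d ` digit_lists j (s - d ^ 2))"
    by (auto simp: digit_lists_def)
qed (auto simp: digit_lists_def)

lemma card_digit_lists_Suc_by_head:
  "card {ds \<in> digit_lists (Suc j) s. P (hd ds)}
    = (\<Sum>d | d < 10 \<and> d ^ 2 \<le> s \<and> P d. card (digit_lists j (s - d ^ 2)))"
  unfolding digit_lists_Suc_by_head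
  by (subst card_UN_disjoint) (auto simp: finite_digit_lists card_image)

lemma digit_lists_0: "digit_lists 0 s = {[]}"
  by (auto simp: digit_lists_def)

lemma digits_square_le_eq:
  fixes k s :: nat
  assumes "k ^ 2 \<le> s" "s < (k + 1) ^ 2" "k < 10"
  shows "{d. d < 10 \<and> d ^ 2 \<le> s \<and> P d} = {d. d \<le> k \<and> P d}"
proof -
  have "d ^ 2 \<le> s \<longleftrightarrow> d \<le> k" for d :: nat
  proof
    assume "d ^ 2 \<le> s"
    then have "d ^ 2 < (k + 1) ^ 2"
      using assms(2) by linarith
    then show "d \<le> k"
      using power_less_imp_less_base[of d 2 "k + 1"] by simp
  next
    assume "d \<le> k"
    then have "d ^ 2 \<le> k ^ 2"
      by (simp add: power_mono)
    then show "d ^ 2 \<le> s"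
      using assms(1) by linarith
  qed
  then show ?thesis
    using assms(3) by auto
qed

lemma card_digit_lists_Suc:
  assumes "1 \<le> s" "s \<le> 3"
  shows "card (digit_lists (Suc j) s) = card (digit_lists j s) + card (digit_lists j (s - 1))"
proof -
  have "{d. d < 10 \<and> d ^ 2 \<le> s} = {..1}"
    using digits_square_le_eq[of 1 s "\<lambda>_. True"] assms by (auto simp: power2_eq_square)
  then show ?thesis
    using card_digit_lists_Suc_by_head[of j s "\<lambda>_. True"] by simp
qed

lemma card_digit_lists_0: "card (digit_lists j 0) = 1"
proof (induction j)
  case (Suc j)
  have "{d. d < 10 \<and> d ^ 2 \<le> 0} = {0::nat}"
    by auto
  then show ?case
    using card_digit_lists_Suc_by_head[of j 0 "\<lambda>_. True"] Suc.IH by simp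
qed (simp add: digit_lists_0)

lemma card_digit_lists_1: "card (digit_lists j 1) = j + 1"
  by (induction j) (simp_all add: card_digit_lists_Suc card_digit_lists_0 digit_lists_0)

lemma card_digit_lists_2: "2 * card (digit_lists j 2) = j ^ 2 + j + 2"
proof (induction j)
  case (Suc j)
  then show ?case
    using card_digit_lists_1[of j] card_digit_lists_Suc[of 2 j] by (simp add: power2_eq_square)
qed (simp add: digit_lists_0)

lemma card_digit_lists_3: "6 * card (digit_lists j 3) = j ^ 3 + 5 * j + 6"
proof (induction j)
  case (Suc j)
  then show ?case
    using card_digit_lists_2[of j] card_digit_lists_Suc[of 3 j]
    by (simp add: power2_eq_square power3_eq_cube algebra_simps)
qed (simp add: digit_lists_0)

text \<open>The digit strings, least significant digit first, of the \<open>m\<close>-digit palindromes whose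
  squaring involves no carries.\<close>

definition carry_free_palindromes :: "nat \<Rightarrow> nat list set" where
  "carry_free_palindromes m =
    {ds. length ds = m \<and> set ds \<subseteq> {..<10} \<and> last ds \<noteq> 0 \<and> rev ds = ds \<and> sum_squares ds \<le> 9}"

lemma palindrome_even_split:
  assumes "rev xs = xs" "length xs = 2 * h"
  shows "xs = take h xs @ rev (take h xs)"
proof -
  have "rev (drop h xs) = take h xs"
    using assms by (simp add: rev_drop)
  then show ?thesis
    using append_take_drop_id[of h xs] by (simp add: rev_swap)
qed

lemma palindrome_odd_split:
  assumes "rev xs = xs" "length xs = 2 * h + 1"
  shows "xs = take h xs @ xs ! h # rev (take h xs)"
proof -
  have "rev (drop (Suc h) xs) = take h xs"
    using assms by (simp add: rev_drop)
  then show ?thesis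
    using id_take_nth_drop[of h xs] assms(2) by (simp add: rev_swap)
qed

lemma sum_squares_pos: "ys \<noteq> [] \<Longrightarrow> hd ys \<noteq> 0 \<Longrightarrow> 0 < sum_squares ys"
  by (cases ys) auto

lemma carry_free_palindromes_even:
  assumes "0 < h"
  shows "carry_free_palindromes (2 * h) = (\<lambda>ys. ys @ rev ys) ` {ys \<in> digit_lists h 4. hd ys \<noteq> 0}"
proof (intro equalityI subsetI)
  fix xs
  assume xs: "xs \<in> carry_free_palindromes (2 * h)"
  define ys where "ys = take h xs"
  have "xs = ys @ rev ys" "length ys = h"
    using xs palindrome_even_split[of xs h] by (simp_all add: carry_free_palindromes_def ys_def)
  moreover from this have "ys \<in> {ys \<in> digit_lists h 4. hd ys \<noteq> 0}"
    using xs assms by (auto simp: carry_free_palindromes_def digit_lists_def last_rev rev_map[symmetric])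
  ultimately show "xs \<in> (\<lambda>ys. ys @ rev ys) ` {ys \<in> digit_lists h 4. hd ys \<noteq> 0}"
    by blast
next
  fix xs
  assume "xs \<in> (\<lambda>ys. ys @ rev ys) ` {ys \<in> digit_lists h 4. hd ys \<noteq> 0}"
  then obtain ys where "xs = ys @ rev ys" "length ys = h" "set ys \<subseteq> {..<10}"
      "sum_squares ys \<le> 4" "hd ys \<noteq> 0"
    by (auto simp: digit_lists_def)
  moreover have "ys \<noteq> []"
    using assms \<open>length ys = h\<close> by auto
  ultimately show "xs \<in> carry_free_palindromes (2 * h)"
    by (simp add: carry_free_palindromes_def last_rev rev_map[symmetric])
qed

lemma card_carry_free_palindromes_even:
  assumes "0 < h"
  shows "card (carry_free_palindromes (2 * h)) = card {ys \<in> digit_lists h 4. hd ys \<noteq> 0}"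
  unfolding carry_free_palindromes_even[OF assms]
proof (rule card_image, rule inj_onI)
  fix ys zs
  assume "ys \<in> {ys \<in> digit_lists h 4. hd ys \<noteq> 0}" "zs \<in> {ys \<in> digit_lists h 4. hd ys \<noteq> 0}"
    and "ys @ rev ys = zs @ rev zs"
  then show "ys = zs"
    by (simp add: digit_lists_def append_eq_append_conv)
qed

lemma carry_free_palindromes_odd:
  assumes "0 < h"
  shows "carry_free_palindromes (2 * h + 1) = (\<lambda>(c, ys). ys @ c # rev ys) `
    (SIGMA c:{..2}. {ys \<in> digit_lists h ((9 - c ^ 2) div 2). hd ys \<noteq> 0})"
proof (intro equalityI subsetI)
  fix xs
  assume xs: "xs \<in> carry_free_palindromes (2 * h + 1)"
  define ys where "ys = take h xs"
  define c where "c = xs ! h"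
  have split: "xs = ys @ c # rev ys" and len: "length ys = h"
    using xs palindrome_odd_split[of xs h] by (simp_all add: carry_free_palindromes_def ys_def c_def)
  then have ys: "ys \<noteq> []" "hd ys \<noteq> 0" "set ys \<subseteq> {..<10}" and "c < 10"
    and bound: "2 * sum_squares ys + c ^ 2 \<le> 9"
    using xs assms by (auto simp: carry_free_palindromes_def last_rev rev_map[symmetric])
  have "c ^ 2 < 3 ^ 2"
    using bound sum_squares_pos[OF ys(1,2)] by simp
  then have "c \<le> 2"
    using power_less_imp_less_base[of c 2 3] by simp
  moreover have "sum_squares ys \<le> (9 - c ^ 2) div 2"
    using bound by (simp add: less_eq_div_iff_mult_less_eq)
  ultimately have "(c, ys) \<in> (SIGMA c:{..2}. {ys \<in> digit_lists h ((9 - c ^ 2) div 2). hd ys \<noteq> 0})"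
    using ys len by (simp add: digit_lists_def)
  then show "xs \<in> (\<lambda>(c, ys). ys @ c # rev ys) `
      (SIGMA c:{..2}. {ys \<in> digit_lists h ((9 - c ^ 2) div 2). hd ys \<noteq> 0})"
    using split by force
next
  fix xs
  assume "xs \<in> (\<lambda>(c, ys). ys @ c # rev ys) `
      (SIGMA c:{..2}. {ys \<in> digit_lists h ((9 - c ^ 2) div 2). hd ys \<noteq> 0})"
  then obtain c ys where "xs = ys @ c # rev ys" "c \<le> 2" "length ys = h" "set ys \<subseteq> {..<10}"
      "sum_squares ys \<le> (9 - c ^ 2) div 2" "hd ys \<noteq> 0"
    by (auto simp: digit_lists_def)
  moreover have "ys \<noteq> []"
    using assms \<open>length ys = h\<close> by auto
  moreover have "2 * sum_squares ys + c ^ 2 \<le> 9"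
  proof -
    have "c ^ 2 \<le> 2 ^ 2"
      using power_mono[OF \<open>c \<le> 2\<close>, of 2] by simp
    moreover have "sum_squares ys * 2 \<le> 9 - c ^ 2"
      using \<open>sum_squares ys \<le> (9 - c ^ 2) div 2\<close> by (simp add: less_eq_div_iff_mult_less_eq)
    ultimately show ?thesis
      by simp
  qed
  ultimately show "xs \<in> carry_free_palindromes (2 * h + 1)"
    by (simp add: carry_free_palindromes_def last_rev rev_map[symmetric])
qed

lemma card_carry_free_palindromes_odd:
  assumes "0 < h"
  shows "card (carry_free_palindromes (2 * h + 1))
    = 2 * card {ys \<in> digit_lists h 4. hd ys \<noteq> 0} + card {ys \<in> digit_lists h 2. hd ys \<noteq> 0}"
proof -
  let ?halves = "\<lambda>c. {ys \<in> digit_lists h ((9 - c ^ 2) div 2). hd ys \<noteq> 0}"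
  have "inj_on (\<lambda>(c, ys). ys @ c # rev ys) (SIGMA c:{..2}. ?halves c)"
  proof (rule inj_onI)
    fix p q
    assume "p \<in> (SIGMA c:{..2}. ?halves c)" "q \<in> (SIGMA c:{..2}. ?halves c)"
      and "(\<lambda>(c, ys). ys @ c # rev ys) p = (\<lambda>(c, ys). ys @ c # rev ys) q"
    then show "p = q"
      by (cases p, cases q) (simp add: digit_lists_def append_eq_append_conv)
  qed
  then have "card (carry_free_palindromes (2 * h + 1)) = (\<Sum>c\<le>2. card (?halves c))"
    unfolding carry_free_palindromes_odd[OF assms] by (simp add: card_image finite_digit_lists)
  moreover have "{..2::nat} = {0, 1, 2}"
    by auto
  ultimately show ?thesis
    by simp
qed

lemma card_digit_lists_hd_nonzero_4: "card {ys \<in> digit_lists (Suc j) 4. hd ys \<noteq> 0} = card (digit_lists j 3) + 1"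
proof -
  have "{d::nat. d < 10 \<and> d ^ 2 \<le> 4 \<and> d \<noteq> 0} = {d. d \<le> 2 \<and> d \<noteq> 0}"
    by (rule digits_square_le_eq) simp_all
  also have "\<dots> = {1, 2}"
    by auto
  finally show ?thesis
    using card_digit_lists_Suc_by_head[of j 4 "\<lambda>d. d \<noteq> 0"] by (simp add: card_digit_lists_0)
qed

lemma card_digit_lists_hd_nonzero_2: "card {ys \<in> digit_lists (Suc j) 2. hd ys \<noteq> 0} = j + 1"
proof -
  have "{d::nat. d < 10 \<and> d ^ 2 \<le> 2 \<and> d \<noteq> 0} = {d. d \<le> 1 \<and> d \<noteq> 0}"
    by (rule digits_square_le_eq) (simp_all add: power2_eq_square)
  also have "\<dots> = {1}"
    by auto
  finally show ?thesis
    using card_digit_lists_Suc_by_head[of j 2 "\<lambda>d. d \<noteq> 0"] card_digit_lists_1[of j]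
    by (simp add: numeral_2_eq_2)
qed

lemma card_carry_free_palindromes_1: "card (carry_free_palindromes 1) = 3"
proof -
  have "carry_free_palindromes 1 = (\<lambda>d. [d]) ` {d. d < 10 \<and> d ^ 2 \<le> 9 \<and> d \<noteq> 0}"
  proof (intro equalityI subsetI)
    fix ds
    assume ds: "ds \<in> carry_free_palindromes 1"
    then obtain d where "ds = [d]"
      by (auto simp: carry_free_palindromes_def length_Suc_conv)
    then show "ds \<in> (\<lambda>d. [d]) ` {d. d < 10 \<and> d ^ 2 \<le> 9 \<and> d \<noteq> 0}"
      using ds by (auto simp: carry_free_palindromes_def)
  qed (auto simp: carry_free_palindromes_def)
  also have "{d::nat. d < 10 \<and> d ^ 2 \<le> 9 \<and> d \<noteq> 0} = {d. d \<le> 3 \<and> d \<noteq> 0}"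
    by (rule digits_square_le_eq) simp_all
  also have "{d::nat. d \<le> 3 \<and> d \<noteq> 0} = {1, 2, 3}"
    by auto
  finally show ?thesis
    by simp
qed

lemma card_carry_free_palindromic_numbers:
  assumes "0 < m"
  shows "card {k. 0 < k \<and> num_digits k = m \<and> is_palindrome k \<and> sum_squares (digits10 k) \<le> 9}
    = card (carry_free_palindromes m)"
proof -
  let ?A = "{k. 0 < k \<and> num_digits k = m}"
  have "carry_free_palindromes m = {ds \<in> digits10 ` ?A. rev ds = ds \<and> sum_squares ds \<le> 9}"
    unfolding digits10_image[OF assms] by (auto simp: carry_free_palindromes_def)
  also have "\<dots> = digits10 ` {k \<in> ?A. rev (digits10 k) = digits10 k \<and> sum_squares (digits10 k) \<le> 9}"
    by (rule Compr_image_eq)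
  finally show ?thesis
    using card_image[OF inj_on_subset[OF inj_digits10 subset_UNIV]] by (simp add: is_palindrome_def conj_assoc)
qed

lemma a_seq_odd: "a_seq (2 * n + 1) = 0"
proof -
  have "2 * n + 1 + 2 \<noteq> 2 * m" for m
    by presburger
  then show ?thesis
    unfolding a_seq_def palindromic_square_iff by simp
qed

lemma a_seq_even: "a_seq (2 * n) = card (carry_free_palindromes (n + 1)) + (if n = 0 then 1 else 0)"
proof -
  let ?B = "{k. 0 < k \<and> num_digits k = n + 1 \<and> is_palindrome k \<and> sum_squares (digits10 k) \<le> 9}"
  have split: "{k. is_palindrome k \<and> is_palindrome (k ^ 2) \<and> num_digits (k ^ 2) = 2 * n + 1}
      = (if n = 0 then {0} else {}) \<union> ?B"
    unfolding palindromic_square_iff by auto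
  have "finite ?B"
  proof (rule finite_subset)
    show "?B \<subseteq> {..<10 ^ (n + 1)}"
    proof
      fix k
      assume "k \<in> ?B"
      then show "k \<in> {..<10 ^ (n + 1)}"
        using less_power_num_digits[of k] by simp
    qed
  qed simp
  then have "a_seq (2 * n) = (if n = 0 then 1 else 0) + card ?B"
    unfolding a_seq_def split by (subst card_Un_disjoint) auto
  then show ?thesis
    by (simp add: card_carry_free_palindromic_numbers)
qed

lemma a_seq_even_closed_form:
  assumes "1 \<le> n"
  shows "real (a_seq (2 * n)) =
    (((-1) ^ n + 3) * real n ^ 3 - (9 * (-1) ^ n + 15) * real n ^ 2
      + (65 * (-1) ^ n + 111) * real n + 21 * (-1) ^ n + 171) / 96"
proof -
  have count: "a_seq (2 * n) = card (carry_free_palindromes (n + 1))"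
    using a_seq_even[of n] assms by simp
  have cubic: "real (card (digit_lists j 3)) = (real j ^ 3 + 5 * real j + 6) / 6" for j
    using arg_cong[OF card_digit_lists_3[of j], of real] by simp
  have "\<exists>j. n = 2 * j + 1 \<or> n = 2 * j + 2"
    using assms by presburger
  then consider j where "n = 2 * j + 1" | j where "n = 2 * j + 2"
    by blast
  then show ?thesis
  proof cases
    case 1
    then have "a_seq (2 * n) = card (digit_lists j 3) + 1"
      using count card_carry_free_palindromes_even[of "Suc j"] card_digit_lists_hd_nonzero_4[of j] by simp
    then show ?thesis
      unfolding 1 using cubic[of j] by (simp add: field_simps power2_eq_square power3_eq_cube)
  next
    case 2
    then have "a_seq (2 * n) = 2 * (card (digit_lists j 3) + 1) + (j + 1)"
      using count card_carry_free_palindromes_odd[of "Suc j"] card_digit_lists_hd_nonzero_4[of j]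
        card_digit_lists_hd_nonzero_2[of j] by simp
    then show ?thesis
      unfolding 2 using cubic[of j] by (simp add: field_simps power2_eq_square power3_eq_cube)
  qed
qed

theorem mainTheorem1:
  shows "a_seq 0 = 4
    \<and> (\<forall>n. a_seq (2*n+1) = 0)
    \<and> (\<forall>n\<ge>1. real (a_seq (2*n)) =
         (((-1)^n + 3) * real n ^ 3 - (9 * (-1)^n + 15) * real n ^ 2
          + (65 * (-1)^n + 111) * real n + 21 * (-1)^n + 171) / 96)"
  using a_seq_even[of 0] card_carry_free_palindromes_1 a_seq_odd a_seq_even_closed_form by simp

end
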